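(* Let $A,B\in\mathbb{R}^{m\times n}$ with $m<n$ and $b\in\mathbb{R}^m$, and let $1\le p\le\infty$. Let $B = M_B - N_B$ with $\operatorname{rank}(M_B) =m$. If $M_B^\dagger b\leq0$, $M_B^\dagger (N_B + A) \geq 0$ and $\|M_B^\dagger (N_B + A)\|_p <1$, then the equation $Ax-B|x|=b$ has at least one nonnegative solution.
   Context: $M^\dagger$ is the Moore–Penrose inverse; $|x|$ is the entrywise absolute value; vector/matrix inequalities are entrywise; $\|\cdot\|_p$ on matrices is the operator norm induced by the vector $p$-norm. *)

theory Defs
  imports "HOL-Analysis.Analysis"
begin

definition moore_penrose :: "real^'n^'m \<Rightarrow> real^'m^'n" where
  "moore_penrose A = (THE X. A ** X ** A = A \<and> X ** A ** X = X \<and>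
       transpose (A ** X) = A ** X \<and> transpose (X ** A) = X ** A)"

definition vec_pnorm :: "ereal \<Rightarrow> real^'n \<Rightarrow> real" where
  "vec_pnorm p x = (if p = \<infinity> then Max (range (\<lambda>i. \<bar>x $ i\<bar>))
     else (\<Sum>i\<in>UNIV. \<bar>x $ i\<bar> powr real_of_ereal p) powr (1 / real_of_ereal p))"

definition mat_pnorm :: "ereal \<Rightarrow> real^'n^'m \<Rightarrow> real" where
  "mat_pnorm p M = Sup {vec_pnorm p (M *v x) / vec_pnorm p x | x. x \<noteq> 0}"

end

theory Submission
  imports Defs
begin

text \<open>Since \<open>M\<^sub>B\<close> has full row rank, \<open>P = M\<^sub>B\<^sup>\<dagger>\<close> is a right inverse of \<open>M\<^sub>B\<close>.
  Put \<open>C = P (N\<^sub>B + A) \<ge> 0\<close> and \<open>c = -P b \<ge> 0\<close>. As \<open>\<parallel>C\<parallel>\<^sub>p < 1\<close>, \<open>C\<close> has no nonzero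
  fixed vector, so \<open>I - C\<close> is invertible and \<open>x = C x + c\<close> has a solution. Its negative part
  \<open>y = max(0, -x)\<close> satisfies \<open>0 \<le> y \<le> C y\<close>, whence \<open>\<parallel>y\<parallel>\<^sub>p \<le> \<parallel>C y\<parallel>\<^sub>p < \<parallel>y\<parallel>\<^sub>p\<close> unless \<open>y = 0\<close>;
  thus \<open>x \<ge> 0\<close>, \<open>|x| = x\<close>, and multiplying \<open>x = C x + c\<close> by \<open>M\<^sub>B\<close> gives \<open>A x - B |x| = b\<close>.\<close>

definition is_penrose_inverse :: "real^'n^'m \<Rightarrow> real^'m^'n \<Rightarrow> bool" where
  "is_penrose_inverse A X \<longleftrightarrow> A ** X ** A = A \<and> X ** A ** X = X \<and>
     transpose (A ** X) = A ** X \<and> transpose (X ** A) = X ** A"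

lemma is_penrose_inverse_unique:
  assumes "is_penrose_inverse A X" and "is_penrose_inverse A Y"
  shows "X = Y"
proof -
  have x1: "A ** X ** A = A" and x2: "X ** A ** X = X"
    and x3: "transpose (A ** X) = A ** X" and x4: "transpose (X ** A) = X ** A"
    using assms(1) unfolding is_penrose_inverse_def by auto
  have y1: "A ** Y ** A = A" and y2: "Y ** A ** Y = Y"
    and y3: "transpose (A ** Y) = A ** Y" and y4: "transpose (Y ** A) = Y ** A"
    using assms(2) unfolding is_penrose_inverse_def by auto
  have "X = X ** transpose (A ** X)" using x2 x3 by (simp add: matrix_mul_assoc)
  also have "\<dots> = X ** transpose X ** transpose (A ** Y ** A)"
    using y1 by (simp add: matrix_transpose_mul matrix_mul_assoc)
  also have "\<dots> = X ** transpose (A ** X) ** transpose (A ** Y)"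
    by (simp add: matrix_transpose_mul matrix_mul_assoc)
  also have "\<dots> = X ** A ** Y" using x2 x3 y3 by (simp add: matrix_mul_assoc)
  finally have X: "X = X ** A ** Y" .
  have "Y = transpose (Y ** A) ** Y" using y2 y4 by simp
  also have "\<dots> = transpose (A ** X ** A) ** transpose Y ** Y"
    using x1 by (simp add: matrix_transpose_mul matrix_mul_assoc)
  also have "\<dots> = transpose (X ** A) ** transpose (Y ** A) ** Y"
    by (simp add: matrix_transpose_mul matrix_mul_assoc)
  also have "\<dots> = X ** A ** (Y ** A ** Y)" using x4 y4 by (simp add: matrix_mul_assoc)
  finally show ?thesis using X y2 by simp
qed

lemma moore_penrose_eqI:
  assumes "is_penrose_inverse A X"
  shows "moore_penrose A = X"
  unfolding moore_penrose_def
  by (rule the_equality) (use assms is_penrose_inverse_unique in \<open>auto simp: is_penrose_inverse_def\<close>)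

lemma mult_transpose_ker_trivial:
  fixes M :: "real^'n^'m"
  assumes "surj ((*v) M)" and "(M ** transpose M) *v y = 0"
  shows "y = 0"
proof -
  have "inner (transpose M *v y) (transpose M *v y) = inner y ((M ** transpose M) *v y)"
    by (metis dot_lmul_matrix matrix_vector_mul_assoc transpose_matrix_vector)
  then have My: "transpose M *v y = 0" using assms(2) by simp
  obtain z where "y = M *v z" using assms(1) by (metis surjD)
  then have "inner y y = inner z (transpose M *v y)"
    by (metis dot_lmul_matrix transpose_matrix_vector transpose_transpose)
  then show ?thesis using My by simp
qed

lemma surj_imp_symmetric_right_inverse:
  fixes M :: "real^'n^'m"
  assumes "surj ((*v) M)"
  obtains X where "M ** X = mat 1" and "transpose (X ** M) = X ** M"
proof -
  let ?S = "M ** transpose M"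
  obtain G where "G ** ?S = mat 1"
    using mult_transpose_ker_trivial[OF assms] matrix_left_invertible_ker by blast
  then have G: "?S ** G = mat 1" using matrix_left_right_inverse by blast
  have "transpose G ** ?S = mat 1"
    using arg_cong[OF G, of transpose] by (simp add: matrix_transpose_mul)
  then have G_sym: "transpose G = G"
    by (metis G matrix_mul_assoc matrix_mul_lid matrix_mul_rid)
  show thesis
  proof
    show "M ** (transpose M ** G) = mat 1" using G by (simp add: matrix_mul_assoc)
    show "transpose (transpose M ** G ** M) = transpose M ** G ** M"
      by (simp add: matrix_transpose_mul G_sym matrix_mul_assoc)
  qed
qed

lemma moore_penrose_right_inverse:
  fixes M :: "real^'n^'m"
  assumes "surj ((*v) M)"
  shows "M ** moore_penrose M = mat 1"
proof -
  obtain X where X: "M ** X = mat 1" and sym: "transpose (X ** M) = X ** M"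
    using surj_imp_symmetric_right_inverse[OF assms] .
  have "X ** M ** X = X" using X by (simp flip: matrix_mul_assoc)
  then have "is_penrose_inverse M X"
    unfolding is_penrose_inverse_def using X sym by simp
  then have "moore_penrose M = X" by (rule moore_penrose_eqI)
  with X show ?thesis by simp
qed

lemma one_le_ereal_cases:
  fixes p :: ereal
  assumes "1 \<le> p"
  obtains "p = \<infinity>" | r where "p = ereal r" and "1 \<le> r"
  using assms by (cases p) auto

lemma vec_pnorm_ereal:
  "vec_pnorm (ereal r) x = (\<Sum>i\<in>UNIV. \<bar>x $ i\<bar> powr r) powr (1 / r)"
  unfolding vec_pnorm_def by simp

lemma abs_le_vec_pnorm_infinity: "\<bar>x $ i\<bar> \<le> vec_pnorm \<infinity> x"
  unfolding vec_pnorm_def by (simp add: Max_ge)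

lemma vec_pnorm_infinity_attained: "\<exists>j. vec_pnorm \<infinity> x = \<bar>x $ j\<bar>"
proof -
  have "Max (range (\<lambda>i. \<bar>x $ i\<bar>)) \<in> range (\<lambda>i. \<bar>x $ i\<bar>)" by (rule Max_in) auto
  then obtain j where "Max (range (\<lambda>i. \<bar>x $ i\<bar>)) = \<bar>x $ j\<bar>" by blast
  then show ?thesis unfolding vec_pnorm_def by auto
qed

lemma vec_pnorm_nonneg: "0 \<le> vec_pnorm p x"
proof (cases "p = \<infinity>")
  case True
  then show ?thesis using order_trans[OF abs_ge_zero abs_le_vec_pnorm_infinity] by simp
qed (simp add: vec_pnorm_def)

lemma vec_pnorm_infinity_le:
  assumes "1 \<le> p"
  shows "vec_pnorm \<infinity> x \<le> vec_pnorm p x"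
  using assms
proof (cases rule: one_le_ereal_cases)
  case (2 r)
  obtain j where j: "vec_pnorm \<infinity> x = \<bar>x $ j\<bar>" using vec_pnorm_infinity_attained by blast
  have "\<bar>x $ j\<bar> = (\<bar>x $ j\<bar> powr r) powr (1 / r)" using 2 by (simp add: powr_powr)
  also have "\<dots> \<le> (\<Sum>i\<in>UNIV. \<bar>x $ i\<bar> powr r) powr (1 / r)"
    by (rule powr_mono2) (use 2 in \<open>auto intro: member_le_sum\<close>)
  finally show ?thesis using j 2 by (simp add: vec_pnorm_ereal)
qed simp

lemma vec_pnorm_le_card_mult_infinity:
  fixes x :: "real^'n"
  assumes "1 \<le> p"
  shows "vec_pnorm p x \<le> real CARD('n) * vec_pnorm \<infinity> x"
proof -
  let ?m = "vec_pnorm \<infinity> x"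
  have card: "1 \<le> real CARD('n)" by (simp add: Suc_leI)
  from assms show ?thesis
  proof (cases rule: one_le_ereal_cases)
    case 1
    then show ?thesis using mult_right_mono[OF card vec_pnorm_nonneg] by simp
  next
    case (2 r)
    have "(\<Sum>i\<in>UNIV. \<bar>x $ i\<bar> powr r) \<le> (\<Sum>i\<in>(UNIV::'n set). ?m powr r)"
      by (intro sum_mono powr_mono2) (use 2 abs_le_vec_pnorm_infinity in auto)
    then have "(\<Sum>i\<in>UNIV. \<bar>x $ i\<bar> powr r) powr (1 / r) \<le> (real CARD('n) * ?m powr r) powr (1 / r)"
      by (intro powr_mono2) (use 2 in \<open>auto intro!: sum_nonneg\<close>)
    also have "\<dots> = real CARD('n) powr (1 / r) * ?m"
      using 2 vec_pnorm_nonneg[of \<infinity> x] by (simp add: powr_mult powr_powr)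
    also have "\<dots> \<le> real CARD('n) powr 1 * ?m"
      by (intro mult_right_mono powr_mono vec_pnorm_nonneg) (use 2 card in auto)
    finally show ?thesis using 2 by (simp add: vec_pnorm_ereal)
  qed
qed

lemma vec_pnorm_mono:
  assumes "1 \<le> p" and le: "\<And>i. \<bar>y $ i\<bar> \<le> \<bar>z $ i\<bar>"
  shows "vec_pnorm p y \<le> vec_pnorm p z"
  using assms(1)
proof (cases rule: one_le_ereal_cases)
  case 1
  obtain j where "vec_pnorm \<infinity> y = \<bar>y $ j\<bar>" using vec_pnorm_infinity_attained by blast
  then show ?thesis
    using 1 le[of j] abs_le_vec_pnorm_infinity[of z j] by simp
next
  case (2 r)
  have "(\<Sum>i\<in>UNIV. \<bar>y $ i\<bar> powr r) \<le> (\<Sum>i\<in>UNIV. \<bar>z $ i\<bar> powr r)"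
    by (intro sum_mono powr_mono2) (use 2 le in auto)
  then have "(\<Sum>i\<in>UNIV. \<bar>y $ i\<bar> powr r) powr (1 / r) \<le> (\<Sum>i\<in>UNIV. \<bar>z $ i\<bar> powr r) powr (1 / r)"
    by (intro powr_mono2) (use 2 in \<open>auto intro!: sum_nonneg\<close>)
  then show ?thesis using 2 by (simp add: vec_pnorm_ereal)
qed

lemma vec_pnorm_pos:
  assumes "1 \<le> p" and "x \<noteq> 0"
  shows "0 < vec_pnorm p x"
proof -
  obtain i where "x $ i \<noteq> 0" using assms(2) by (metis vec_eq_iff zero_index)
  then have "0 < vec_pnorm \<infinity> x" using abs_le_vec_pnorm_infinity[of x i] by simp
  then show ?thesis using vec_pnorm_infinity_le[OF assms(1)] by (meson less_le_trans)
qed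

lemma vec_pnorm_infinity_matrix_vector_le:
  "vec_pnorm \<infinity> (C *v x) \<le> (\<Sum>i\<in>UNIV. \<Sum>j\<in>UNIV. \<bar>C $ i $ j\<bar>) * vec_pnorm \<infinity> x"
proof -
  obtain i where i: "vec_pnorm \<infinity> (C *v x) = \<bar>(C *v x) $ i\<bar>"
    using vec_pnorm_infinity_attained by blast
  have "\<bar>(C *v x) $ i\<bar> \<le> (\<Sum>j\<in>UNIV. \<bar>C $ i $ j\<bar> * \<bar>x $ j\<bar>)"
    unfolding matrix_vector_mult_def by (simp add: sum_abs[THEN order_trans] abs_mult)
  also have "\<dots> \<le> (\<Sum>j\<in>UNIV. \<bar>C $ i $ j\<bar>) * vec_pnorm \<infinity> x"
    unfolding sum_distrib_right
    by (intro sum_mono mult_left_mono abs_le_vec_pnorm_infinity) simp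
  also have "\<dots> \<le> (\<Sum>i\<in>UNIV. \<Sum>j\<in>UNIV. \<bar>C $ i $ j\<bar>) * vec_pnorm \<infinity> x"
    by (intro mult_right_mono member_le_sum vec_pnorm_nonneg) (auto intro!: sum_nonneg)
  finally show ?thesis using i by simp
qed

lemma bdd_above_vec_pnorm_ratios:
  fixes C :: "real^'n^'k"
  assumes "1 \<le> p"
  shows "bdd_above {vec_pnorm p (C *v x) / vec_pnorm p x | x. x \<noteq> 0}"
proof -
  define K where "K = real CARD('k) * (\<Sum>i\<in>UNIV. \<Sum>j\<in>UNIV. \<bar>C $ i $ j\<bar>)"
  have "vec_pnorm p (C *v x) \<le> K * vec_pnorm p x" for x
  proof -
    have "vec_pnorm p (C *v x) \<le> real CARD('k) * vec_pnorm \<infinity> (C *v x)"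
      by (rule vec_pnorm_le_card_mult_infinity[OF assms])
    also have "\<dots> \<le> K * vec_pnorm \<infinity> x"
      unfolding K_def mult.assoc by (intro mult_left_mono vec_pnorm_infinity_matrix_vector_le) simp
    also have "\<dots> \<le> K * vec_pnorm p x"
      unfolding K_def
      by (intro mult_left_mono vec_pnorm_infinity_le[OF assms]) (auto intro!: mult_nonneg_nonneg sum_nonneg)
    finally show ?thesis .
  qed
  then show ?thesis
    by (intro bdd_aboveI[where M = K]) (auto simp: divide_le_eq vec_pnorm_pos[OF assms])
qed

lemma vec_pnorm_matrix_vector_le:
  assumes "1 \<le> p" and "x \<noteq> 0"
  shows "vec_pnorm p (C *v x) \<le> mat_pnorm p C * vec_pnorm p x"
proof -
  have "vec_pnorm p (C *v x) / vec_pnorm p x \<le> mat_pnorm p C"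
    unfolding mat_pnorm_def
    by (rule cSup_upper) (use assms bdd_above_vec_pnorm_ratios[OF assms(1), of C] in auto)
  then show ?thesis using vec_pnorm_pos[OF assms] by (simp add: divide_le_eq)
qed

lemma vec_pnorm_matrix_vector_less:
  assumes "1 \<le> p" and "mat_pnorm p C < 1" and "x \<noteq> 0"
  shows "vec_pnorm p (C *v x) < vec_pnorm p x"
proof -
  have "vec_pnorm p (C *v x) \<le> mat_pnorm p C * vec_pnorm p x"
    by (rule vec_pnorm_matrix_vector_le[OF assms(1,3)])
  also have "\<dots> < vec_pnorm p x"
    using assms(2) vec_pnorm_pos[OF assms(1,3)] by simp
  finally show ?thesis .
qed

lemma contraction_affine_fixed_point_exists:
  fixes C :: "real^'n^'n"
  assumes "1 \<le> p" and "mat_pnorm p C < 1"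
  obtains x where "x = C *v x + c"
proof -
  have "x = 0" if "(mat 1 - C) *v x = 0" for x
  proof -
    have "C *v x = x" using that by (simp add: matrix_vector_mult_diff_rdistrib)
    then show ?thesis using vec_pnorm_matrix_vector_less[OF assms] by fastforce
  qed
  then obtain G where "G ** (mat 1 - C) = mat 1" using matrix_left_invertible_ker by blast
  then have "surj ((*v) (mat 1 - C))"
    using matrix_left_right_inverse matrix_right_invertible_surjective by blast
  then obtain x where "(mat 1 - C) *v x = c" by (metis surjD)
  then have "x = C *v x + c" by (simp add: matrix_vector_mult_diff_rdistrib algebra_simps)
  then show thesis ..
qed

lemma subinvariant_nonneg_vector_eq_0:
  assumes "1 \<le> p" and "mat_pnorm p C < 1"
    and nonneg: "\<And>i. 0 \<le> y $ i" and sub: "\<And>i. y $ i \<le> (C *v y) $ i"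
  shows "y = 0"
proof (rule ccontr)
  assume "y \<noteq> 0"
  then have "vec_pnorm p (C *v y) < vec_pnorm p y"
    using vec_pnorm_matrix_vector_less[OF assms(1,2)] by blast
  moreover have "vec_pnorm p y \<le> vec_pnorm p (C *v y)"
    by (rule vec_pnorm_mono[OF assms(1)]) (use nonneg sub in \<open>metis abs_of_nonneg order_trans\<close>)
  ultimately show False by linarith
qed

lemma negative_part_subinvariant:
  fixes C :: "'a::linordered_idom^'n^'n"
  assumes C_nonneg: "\<And>i j. 0 \<le> C $ i $ j" and c_nonneg: "\<And>i. 0 \<le> c $ i"
    and fixed: "x = C *v x + c"
  defines "y \<equiv> \<chi> i. max 0 (- (x $ i))"
  shows "y $ i \<le> (C *v y) $ i"
proof -
  have "x $ i = (C *v x) $ i + c $ i" using arg_cong[OF fixed, of "\<lambda>v. v $ i"] by simp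
  then have "- (x $ i) \<le> - ((C *v x) $ i)" using c_nonneg[of i] by linarith
  also have "\<dots> = (\<Sum>j\<in>UNIV. C $ i $ j * - (x $ j))"
    by (simp add: matrix_vector_mult_def sum_negf)
  also have "\<dots> \<le> (\<Sum>j\<in>UNIV. C $ i $ j * y $ j)"
    unfolding y_def by (intro sum_mono mult_left_mono) (simp_all add: C_nonneg)
  also have "\<dots> = (C *v y) $ i" by (simp add: matrix_vector_mult_def)
  finally have "- (x $ i) \<le> (C *v y) $ i" .
  moreover have "0 \<le> (C *v y) $ i"
    unfolding matrix_vector_mult_def y_def by (auto intro!: sum_nonneg simp: C_nonneg)
  ultimately show ?thesis unfolding y_def by simp
qed

lemma nonneg_contraction_fixed_point_nonneg:
  assumes "1 \<le> p" and "mat_pnorm p C < 1"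
    and "\<And>i j. 0 \<le> C $ i $ j" and "\<And>i. 0 \<le> c $ i"
    and "x = C *v x + c"
  shows "0 \<le> x $ i"
proof -
  let ?y = "\<chi> i. max 0 (- (x $ i))"
  have "?y = 0"
    using subinvariant_nonneg_vector_eq_0[OF assms(1,2)] negative_part_subinvariant[OF assms(3-5)]
    by simp
  then have "max 0 (- (x $ i)) = 0" by (metis vec_lambda_beta zero_index)
  then show ?thesis by simp
qed

lemma right_inverse_fixed_point_solves:
  fixes M N A :: "'a::comm_ring_1^'n^'m" and P :: "'a^'m^'n"
  assumes "M ** P = mat 1" and "x = (P ** (N + A)) *v x - P *v b"
  shows "A *v x - (M - N) *v x = b"
proof -
  have "M *v x = M *v ((P ** (N + A)) *v x - P *v b)"
    using arg_cong[OF assms(2), of "(*v) M"] .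
  also have "\<dots> = M *v ((P ** (N + A)) *v x) - M *v (P *v b)"
    by (rule matrix_vector_mult_diff_distrib)
  also have "\<dots> = (N + A) *v x - b"
    using assms(1) by (simp add: matrix_vector_mul_assoc matrix_mul_assoc)
  finally show ?thesis by (simp add: matrix_vector_mult_diff_rdistrib matrix_vector_mult_add_rdistrib)
qed

theorem corollary3p4:
  fixes A B M_B N_B :: "real^'n^'m" and b :: "real^'m" and p :: ereal
  assumes "CARD('m) < CARD('n)"
    and "1 \<le> p"
    and "B = M_B - N_B"
    and "rank M_B = CARD('m)"
    and "\<forall>i. (moore_penrose M_B *v b) $ i \<le> 0"
    and "\<forall>i j. (moore_penrose M_B ** (N_B + A)) $ i $ j \<ge> 0"
    and "mat_pnorm p (moore_penrose M_B ** (N_B + A)) < 1"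
  shows "\<exists>x :: real^'n. (\<forall>i. x $ i \<ge> 0) \<and> A *v x - B *v (\<chi> i. \<bar>x $ i\<bar>) = b"
proof -
  let ?P = "moore_penrose M_B"
  let ?C = "?P ** (N_B + A)"
  have right_inv: "M_B ** ?P = mat 1"
    using assms(4) full_rank_surjective moore_penrose_right_inverse by blast
  obtain x where fixed: "x = ?C *v x + - (?P *v b)"
    using contraction_affine_fixed_point_exists[OF assms(2,7)] .
  have nonneg: "0 \<le> x $ i" for i
    by (rule nonneg_contraction_fixed_point_nonneg[OF assms(2,7) _ _ fixed]) (use assms(5,6) in auto)
  then have "(\<chi> i. \<bar>x $ i\<bar>) = x" by (simp add: vec_eq_iff)
  moreover have "A *v x - B *v x = b"
    unfolding assms(3) by (rule right_inverse_fixed_point_solves[OF right_inv]) (use fixed in simp)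
  ultimately show ?thesis using nonneg by (intro exI[of _ x]) simp
qed

end
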